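(* Let $n\ge1$, let $C_{2n}$ be the cyclic group of order $2n$ generated by the rotation $j\mapsto j+1\pmod{2n}$ of $[2n]$, and let $D_{2n}$ be the dihedral group of order $4n$ of symmetries of the $2n$-gon, generated by this rotation and the reflection $j\mapsto -j \pmod{2n}$. Let $c_n$ and $d_n$ be the numbers of equivalence classes of $n$-diagrams under the actions of $C_{2n}$ and $D_{2n}$ respectively. Then \[ d_n = \frac{1}{2} \Big( c_n + \frac{1}{2} \big( \kappa_{n - 1} + \kappa_n \big) \Big), \qquad\text{where}\qquad \kappa_m = \sum_{k = 0}^{\lfloor m/2 \rfloor} \frac{m!}{k! \, (m - 2k)!}. \]
   Context: A chord diagram of order $n$ (an $n$-diagram) is a 3-regular graph on vertex set $[2n]=\{1,\dots,2n\}$ containing the $2n$-circuit $\Delta_{2n}=(1\,2\,\dots\,2n)$ as a subgraph; the edges not in $\Delta_{2n}$ are the chords (they form a perfect matching of $[2n]$). Given a group $G$ of permutations of $[2n]$ acting on $\Delta_{2n}$, two $n$-diagrams are equivalent if some $g\in G$ takes the chords of the first onto the chords of the second. *)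

theory Defs
  imports Complex_Main
begin

text \<open>Vertices of the 2n-circuit are labelled 0,...,2n-1 (i.e. j corresponds to j+1 in [2n]);
  the circuit is (0 1 ... 2n-1). The chords of an n-diagram form a perfect matching of the
  vertex set; an n-diagram is identified with its set of chords.\<close>

definition vertices :: "nat \<Rightarrow> nat set" where
  "vertices n = {0..<2*n}"

definition is_chord_diagram :: "nat \<Rightarrow> nat set set \<Rightarrow> bool" where
  "is_chord_diagram n M \<longleftrightarrow>
     (\<forall>e\<in>M. e \<subseteq> vertices n \<and> card e = 2) \<and>
     (\<forall>v\<in>vertices n. \<exists>!e. e \<in> M \<and> v \<in> e)"

definition chord_diagrams :: "nat \<Rightarrow> nat set set set" where
  "chord_diagrams n = {M. is_chord_diagram n M}"

definition rotation :: "nat \<Rightarrow> nat \<Rightarrow> nat" where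
  "rotation n j = (j + 1) mod (2*n)"

definition reflection :: "nat \<Rightarrow> nat \<Rightarrow> nat" where
  "reflection n j = (2*n - j) mod (2*n)"

definition cyclic_group :: "nat \<Rightarrow> (nat \<Rightarrow> nat) set" where
  "cyclic_group n = {rotation n ^^ k | k. k < 2*n}"

definition dihedral_group :: "nat \<Rightarrow> (nat \<Rightarrow> nat) set" where
  "dihedral_group n = cyclic_group n \<union> {(rotation n ^^ k) \<circ> reflection n | k. k < 2*n}"

definition diagram_equiv :: "nat \<Rightarrow> (nat \<Rightarrow> nat) set \<Rightarrow> (nat set set \<times> nat set set) set" where
  "diagram_equiv n G = {(M, M'). M \<in> chord_diagrams n \<and> M' \<in> chord_diagrams n \<and>
      (\<exists>g\<in>G. (\<lambda>e. g ` e) ` M = M')}"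

definition num_classes :: "nat \<Rightarrow> (nat \<Rightarrow> nat) set \<Rightarrow> nat" where
  "num_classes n G = card (chord_diagrams n // diagram_equiv n G)"

definition c_num :: "nat \<Rightarrow> nat" where
  "c_num n = num_classes n (cyclic_group n)"

definition d_num :: "nat \<Rightarrow> nat" where
  "d_num n = num_classes n (dihedral_group n)"

definition kappa :: "nat \<Rightarrow> real" where
  "kappa m = (\<Sum>k = 0..m div 2. fact m / (fact k * fact (m - 2*k)))"

end

theory Submission
  imports Defs "HOL-Algebra.Group_Action"
begin

(* Burnside's lemma for C_2n and D_2n acting on the n-diagrams gives 2n c_n = sum of the fixed-point
   counts of the rotations and 4n d_n = 2n c_n + sum of the fixed-point counts of the reflections.
   A diagram is fixed by the reflection x -> k - x iff its chords form a perfect matching of [2n]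
   invariant under this involution. For odd k the involution has no fixed points; for even k it
   fixes exactly k/2 and k/2 + n, which must then be joined by a chord. Perfect matchings of 2m
   points invariant under a fixed-point-free involution s are counted by kappa_m: the partner of a
   point x is either s x, leaving 2m - 2 points, or one of the 2m - 2 remaining points z, which
   forces the chord {s x, s z} as well and leaves 2m - 4 points. This is the recursion
   kappa_m = kappa_(m-1) + 2 (m-1) kappa_(m-2) of the closed form, and summing over the 2n
   reflections gives 4n d_n = 2n c_n + n (kappa_(n-1) + kappa_n). *)

definition kappa_term :: "nat \<Rightarrow> nat \<Rightarrow> real" where
  "kappa_term m k = (if 2 * k \<le> m then fact m / (fact k * fact (m - 2 * k)) else 0)"

lemma kappa_eq_sum_kappa_term:
  assumes "m div 2 \<le> N"
  shows "kappa m = (\<Sum>k\<le>N. kappa_term m k)"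
proof -
  have "kappa m = (\<Sum>k\<le>m div 2. kappa_term m k)"
    unfolding kappa_def atMost_atLeast0 by (rule sum.cong) (auto simp: kappa_term_def)
  also have "\<dots> = (\<Sum>k\<le>N. kappa_term m k)"
    using assms by (intro sum.mono_neutral_left) (auto simp: kappa_term_def)
  finally show ?thesis .
qed

lemma kappa_term_Suc_Suc:
  "kappa_term (Suc (Suc m)) (Suc k) = kappa_term (Suc m) (Suc k) + 2 * (Suc m) * kappa_term m k"
proof (cases "2 * k \<le> m")
  case True
  define j where "j = m - 2 * k"
  have m: "m = 2 * k + j" using True unfolding j_def by simp
  define q where "q = fact m / (fact k * fact j :: real)"
  have T0: "kappa_term m k = q"
    by (simp add: kappa_term_def q_def m)
  have T2: "kappa_term (Suc (Suc m)) (Suc k) = (m + 2) * (m + 1) / (k + 1) * q"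
    by (simp add: kappa_term_def q_def m field_simps)
  have T1: "kappa_term (Suc m) (Suc k) = j * (m + 1) / (k + 1) * q"
  proof (cases j)
    case (Suc i)
    then have jq: "real j * q = fact m / (fact k * fact i)"
      by (simp add: q_def)
    have "kappa_term (Suc m) (Suc k) = fact (Suc m) / (fact (Suc k) * fact i)"
      using Suc m by (simp add: kappa_term_def)
    also have "\<dots> = (m + 1) / (k + 1) * (fact m / (fact k * fact i))"
      by (simp add: field_simps)
    also have "\<dots> = j * (m + 1) / (k + 1) * q"
      unfolding jq [symmetric] by (simp add: algebra_simps)
    finally show ?thesis .
  qed (simp add: kappa_term_def m)
  have "real (m + 2) = j + 2 * (k + 1)" using m by simp
  then show ?thesis unfolding T0 T1 T2 by (simp add: field_simps)
next
  case False
  then show ?thesis by (simp add: kappa_term_def)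
qed

lemma kappa_term_0: "kappa_term m 0 = 1"
  by (simp add: kappa_term_def)

lemma kappa_0: "kappa 0 = 1"
  by (simp add: kappa_def)

lemma kappa_Suc_0: "kappa (Suc 0) = 1"
  by (simp add: kappa_def)

lemma kappa_Suc_Suc: "kappa (Suc (Suc m)) = kappa (Suc m) + 2 * Suc m * kappa m"
proof -
  define N where "N = Suc m div 2"
  have "kappa (Suc (Suc m)) = (\<Sum>k\<le>Suc N. kappa_term (Suc (Suc m)) k)"
    and "kappa (Suc m) = (\<Sum>k\<le>Suc N. kappa_term (Suc m) k)"
    and "kappa m = (\<Sum>k\<le>N. kappa_term m k)"
    by (intro kappa_eq_sum_kappa_term; simp add: N_def)+
  then show ?thesis
    unfolding sum.atMost_Suc_shift by (simp add: kappa_term_0 kappa_term_Suc_Suc sum.distrib sum_distrib_left)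
qed

lemma kappa_recurrence:
  assumes "m \<ge> 1"
  shows "kappa m = kappa (m - 1) + 2 * real (m - 1) * kappa (m - 2)"
proof (cases "m = 1")
  case False
  then have "2 \<le> m" using assms by simp
  then obtain k where "m = Suc (Suc k)" by (metis add_2_eq_Suc le_Suc_ex)
  then show ?thesis by (simp add: kappa_Suc_Suc)
qed (simp add: kappa_0 kappa_Suc_0)

definition perfect_matching :: "'a set \<Rightarrow> 'a set set \<Rightarrow> bool" where
  "perfect_matching A M \<longleftrightarrow>
    (\<forall>e\<in>M. e \<subseteq> A \<and> card e = 2) \<and> (\<forall>v\<in>A. \<exists>!e. e \<in> M \<and> v \<in> e)"

lemma perfect_matching_edge:
  "perfect_matching A M \<Longrightarrow> e \<in> M \<Longrightarrow> e \<subseteq> A \<and> card e = 2"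
  unfolding perfect_matching_def by blast

lemma perfect_matching_edge_unique:
  "perfect_matching A M \<Longrightarrow> e \<in> M \<Longrightarrow> e' \<in> M \<Longrightarrow> v \<in> e \<Longrightarrow> v \<in> e'
    \<Longrightarrow> e = e'"
  unfolding perfect_matching_def by blast

lemma perfect_matching_cover:
  "perfect_matching A M \<Longrightarrow> v \<in> A \<Longrightarrow> \<exists>e\<in>M. v \<in> e"
  unfolding perfect_matching_def by blast

lemma perfect_matching_edge_through:
  assumes "perfect_matching A M" "v \<in> A"
  obtains w where "{v, w} \<in> M" "w \<in> A" "w \<noteq> v"
proof -
  obtain e where e: "e \<in> M" "v \<in> e" using perfect_matching_cover[OF assms] by blast
  then have "e \<subseteq> A" "card e = 2" using perfect_matching_edge[OF assms(1)] by auto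
  then obtain w where "e = {v, w}" "w \<noteq> v" using e(2) by (auto simp: card_2_iff)
  then show ?thesis using that e \<open>e \<subseteq> A\<close> by blast
qed

lemma perfect_matching_Pow: "perfect_matching A M \<Longrightarrow> M \<subseteq> Pow A"
  unfolding perfect_matching_def by auto

lemma perfect_matching_empty_iff: "perfect_matching {} M \<longleftrightarrow> M = {}"
  unfolding perfect_matching_def by (auto simp: card_2_iff)

lemma perfect_matching_doubleton: "a \<noteq> b \<Longrightarrow> perfect_matching {a, b} {{a, b}}"
  unfolding perfect_matching_def by auto

lemma perfect_matching_Un:
  assumes M: "perfect_matching A M" and N: "perfect_matching B N" and AB: "A \<inter> B = {}"
  shows "perfect_matching (A \<union> B) (M \<union> N)"
  unfolding perfect_matching_def
proof (rule conjI; rule ballI)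
  show "e \<subseteq> A \<union> B \<and> card e = 2" if "e \<in> M \<union> N" for e
    using that perfect_matching_edge[OF M] perfect_matching_edge[OF N] by blast
  show "\<exists>!e. e \<in> M \<union> N \<and> v \<in> e" if "v \<in> A \<union> B" for v
  proof (cases "v \<in> A")
    case True
    then obtain e where e: "e \<in> M" "v \<in> e" using perfect_matching_cover[OF M] by blast
    have "v \<notin> e'" if "e' \<in> N" for e' using that True AB perfect_matching_edge[OF N] by blast
    then show ?thesis using e perfect_matching_edge_unique[OF M] by (intro ex1I[of _ e]) auto
  next
    case False
    then obtain e where e: "e \<in> N" "v \<in> e"
      using \<open>v \<in> A \<union> B\<close> perfect_matching_cover[OF N] by blast
    have "v \<notin> e'" if "e' \<in> M" for e' using that False perfect_matching_edge[OF M] by blast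
    then show ?thesis using e perfect_matching_edge_unique[OF N] by (intro ex1I[of _ e]) auto
  qed
qed

lemma perfect_matching_two_doubletons:
  "distinct [a, b, c, d] \<Longrightarrow> perfect_matching {a, b, c, d} {{a, b}, {c, d}}"
  using perfect_matching_Un[OF perfect_matching_doubleton perfect_matching_doubleton, of a b c d]
  by (simp add: insert_commute)

lemma perfect_matching_Diff:
  assumes M: "perfect_matching A M" and "C \<subseteq> M"
  shows "perfect_matching (A - \<Union>C) (M - C)"
  unfolding perfect_matching_def
proof (rule conjI; rule ballI)
  have disjoint: "e \<inter> \<Union>C = {}" if "e \<in> M - C" for e
    using that assms perfect_matching_edge_unique[OF M] by blast
  then show "e \<subseteq> A - \<Union>C \<and> card e = 2" if "e \<in> M - C" for e
    using that perfect_matching_edge[OF M] by blast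
  show "\<exists>!e. e \<in> M - C \<and> v \<in> e" if v: "v \<in> A - \<Union>C" for v
  proof -
    obtain e where e: "e \<in> M" "v \<in> e" using v perfect_matching_cover[OF M] by blast
    then have "e \<notin> C" using v by blast
    then show ?thesis using e perfect_matching_edge_unique[OF M] by (intro ex1I[of _ e]) auto
  qed
qed

lemma perfect_matching_image:
  assumes M: "perfect_matching A M" and g: "bij_betw g A A"
  shows "perfect_matching A (image g ` M)"
  unfolding perfect_matching_def
proof (rule conjI; rule ballI)
  have inj: "inj_on g A" and gA: "g ` A = A" using g by (auto simp: bij_betw_def)
  show "e' \<subseteq> A \<and> card e' = 2" if e': "e' \<in> image g ` M" for e'
  proof -
    obtain e where e: "e \<in> M" "e' = g ` e" using e' by blast
    then have "e \<subseteq> A" "card e = 2" using perfect_matching_edge[OF M] by auto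
    then show ?thesis using e gA inj by (auto simp: card_image inj_on_subset)
  qed
  show "\<exists>!e. e \<in> image g ` M \<and> v \<in> e" if v: "v \<in> A" for v
  proof -
    have "v \<in> g ` A" using v gA by simp
    then obtain u where u: "u \<in> A" "g u = v" by blast
    obtain e where e: "e \<in> M" "u \<in> e" using perfect_matching_cover[OF M u(1)] by blast
    have unique: "e' = g ` e" if e': "e' \<in> image g ` M" "v \<in> e'" for e'
    proof -
      obtain e1 w where e1: "e1 \<in> M" "e' = g ` e1" "w \<in> e1" "g w = v" using e' by blast
      have "w \<in> A" using e1 perfect_matching_edge[OF M] by blast
      then have "w = u" using e1(4) u inj by (auto dest: inj_onD)
      then show ?thesis using e1 e perfect_matching_edge_unique[OF M] by blast
    qed
    show ?thesis
    proof (rule ex1I[of _ "g ` e"])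
      show "g ` e \<in> image g ` M \<and> v \<in> g ` e" using e u by auto
    qed (use unique in blast)
  qed
qed

lemma perfect_matching_image_cong:
  assumes M: "perfect_matching V M" and st: "\<forall>x\<in>V. s x = t x"
  shows "image s ` M = image t ` M"
proof (rule image_cong[OF refl])
  fix e assume "e \<in> M"
  then have "e \<subseteq> V" using perfect_matching_edge[OF M] by blast
  then show "s ` e = t ` e" using st by (simp add: subset_iff cong: image_cong)
qed

definition involution_on :: "'a set \<Rightarrow> ('a \<Rightarrow> 'a) \<Rightarrow> bool" where
  "involution_on A s \<longleftrightarrow> (\<forall>x\<in>A. s x \<in> A \<and> s (s x) = x)"

lemma involution_on_image_image: "involution_on A s \<Longrightarrow> e \<subseteq> A \<Longrightarrow> s ` s ` e = e"
  unfolding involution_on_def by (force simp: image_iff)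

lemma involution_on_image_stable:
  assumes "involution_on A s" "X \<subseteq> Pow A" "image s ` X \<subseteq> X"
  shows "image s ` X = X"
proof
  show "X \<subseteq> image s ` X"
  proof
    fix e assume e: "e \<in> X"
    then have "s ` s ` e = e" using assms(2) by (intro involution_on_image_image[OF assms(1)]) blast
    moreover have "s ` e \<in> X" using e assms(3) by blast
    ultimately show "e \<in> image s ` X" by (metis image_eqI)
  qed
qed (fact assms(3))

lemma involution_on_Diff: "involution_on A s \<Longrightarrow> s ` D \<subseteq> D \<Longrightarrow> involution_on (A - D) s"
  unfolding involution_on_def by (metis Diff_iff image_subset_iff)

definition invariant_matchings :: "'a set \<Rightarrow> ('a \<Rightarrow> 'a) \<Rightarrow> 'a set set set" where
  "invariant_matchings A s = {M. perfect_matching A M \<and> image s ` M = M}"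

lemma invariant_matchings_cong:
  "\<forall>x\<in>V. s x = t x \<Longrightarrow> invariant_matchings V s = invariant_matchings V t"
  unfolding invariant_matchings_def by (rule Collect_cong) (metis perfect_matching_image_cong)

lemma invariant_matchings_empty: "invariant_matchings {} s = {{}}"
  by (auto simp: invariant_matchings_def perfect_matching_empty_iff)

lemma card_invariant_matchings_containing:
  assumes s: "involution_on A s" and C: "perfect_matching (\<Union>C) C" "\<Union>C \<subseteq> A" "image s ` C = C"
  shows "card {M \<in> invariant_matchings A s. C \<subseteq> M} = card (invariant_matchings (A - \<Union>C) s)"
proof (rule bij_betw_same_card[of "\<lambda>M. M - C"], rule bij_betw_byWitness[where f' = "\<lambda>M. M \<union> C"])
  show "\<forall>M\<in>{M \<in> invariant_matchings A s. C \<subseteq> M}. M - C \<union> C = M" by auto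
  have "e \<noteq> {}" if "e \<in> C" for e using perfect_matching_edge[OF C(1) that] by auto
  then show "\<forall>M\<in>invariant_matchings (A - \<Union>C) s. M \<union> C - C = M"
    by (fastforce simp: invariant_matchings_def dest: perfect_matching_edge)
  show "(\<lambda>M. M - C) ` {M \<in> invariant_matchings A s. C \<subseteq> M} \<subseteq> invariant_matchings (A - \<Union>C) s"
  proof clarify
    fix M assume "M \<in> invariant_matchings A s" "C \<subseteq> M"
    then have M: "perfect_matching A M" "image s ` M = M" by (auto simp: invariant_matchings_def)
    have "image s ` (M - C) \<subseteq> M - C"
    proof
      fix e' assume "e' \<in> image s ` (M - C)"
      then obtain e where e: "e \<in> M" "e \<notin> C" "e' = s ` e" by blast
      then have "e \<subseteq> A" using perfect_matching_edge[OF M(1)] by blast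
      then have "e = s ` e'" using e involution_on_image_image[OF s] by blast
      then show "e' \<in> M - C" using e M(2) C(3) by blast
    qed
    moreover have "M - C \<subseteq> Pow A" using perfect_matching_Pow[OF M(1)] by blast
    ultimately have "image s ` (M - C) = M - C"
      using involution_on_image_stable[OF s] by blast
    then show "M - C \<in> invariant_matchings (A - \<Union>C) s"
      using perfect_matching_Diff[OF M(1) \<open>C \<subseteq> M\<close>] by (auto simp: invariant_matchings_def)
  qed
  show "(\<lambda>M. M \<union> C) ` invariant_matchings (A - \<Union>C) s
      \<subseteq> {M \<in> invariant_matchings A s. C \<subseteq> M}"
  proof (rule image_subsetI, simp)
    fix M assume "M \<in> invariant_matchings (A - \<Union>C) s"
    then have "perfect_matching (A - \<Union>C) M" "image s ` M = M" by (auto simp: invariant_matchings_def)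
    moreover have "A - \<Union>C \<union> \<Union>C = A" using C(2) by blast
    ultimately show "M \<union> C \<in> invariant_matchings A s"
      using perfect_matching_Un[OF _ C(1), of "A - \<Union>C" M] C(3)
      by (auto simp: invariant_matchings_def image_Un)
  qed
qed

lemma card_matchings_by_partner:
  assumes A: "finite A" and x: "x \<in> A" and S: "\<forall>M\<in>S. perfect_matching A M"
  shows "card S = (\<Sum>z\<in>A - {x}. card {M \<in> S. {x, z} \<in> M})"
proof -
  have "S = (\<Union>z\<in>A - {x}. {M \<in> S. {x, z} \<in> M})"
  proof (intro equalityI subsetI)
    fix M assume "M \<in> S"
    then obtain z where "{x, z} \<in> M" "z \<in> A" "z \<noteq> x"
      using S x perfect_matching_edge_through by metis
    then show "M \<in> (\<Union>z\<in>A - {x}. {M \<in> S. {x, z} \<in> M})" using \<open>M \<in> S\<close> by blast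
  qed blast
  moreover have "finite S"
    using S A by (intro finite_subset[of S "Pow (Pow A)"]) (auto dest: perfect_matching_Pow)
  moreover have "{M \<in> S. {x, z} \<in> M} \<inter> {M \<in> S. {x, z'} \<in> M} = {}"
    if "z \<in> A - {x}" "z' \<in> A - {x}" "z \<noteq> z'" for z z'
    using that S perfect_matching_edge_unique[of A _ "{x, z}" "{x, z'}" x]
    by (auto simp: doubleton_eq_iff)
  ultimately show ?thesis
    using A by (subst card_UN_disjoint[symmetric]) auto
qed

lemma invariant_matchings_image_edge: "M \<in> invariant_matchings A s \<Longrightarrow> e \<in> M \<Longrightarrow> s ` e \<in> M"
  unfolding invariant_matchings_def by blast

lemma card_invariant_matchings_by_partner:
  assumes A: "finite A" and x: "x \<in> A" "s x \<in> A" "s x \<noteq> x"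
  shows "card (invariant_matchings A s) = card {M \<in> invariant_matchings A s. {{x, s x}} \<subseteq> M}
    + (\<Sum>z\<in>A - {x, s x}. card {M \<in> invariant_matchings A s. {{x, z}, {s x, s z}} \<subseteq> M})"
proof -
  let ?IM = "invariant_matchings A s"
  have "{M \<in> ?IM. {x, z} \<in> M} = {M \<in> ?IM. {{x, z}, {s x, s z}} \<subseteq> M}" for z
    using invariant_matchings_image_edge[of _ A s "{x, z}"] by auto
  moreover have "A - {x} = insert (s x) (A - {x, s x})" using x by auto
  ultimately show ?thesis
    using card_matchings_by_partner[OF A x(1), of ?IM] A by (simp add: invariant_matchings_def)
qed

lemma card_invariant_matchings_fixpoint_free:
  assumes "finite A" "involution_on A s" "\<forall>x\<in>A. s x \<noteq> x" "card A = 2 * m"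
  shows "real (card (invariant_matchings A s)) = kappa m"
  using assms
proof (induction m arbitrary: A rule: less_induct)
  case (less m A)
  note A = less.prems(1) and s = less.prems(2) and fpf = less.prems(3) and card_A = less.prems(4)
  let ?IM = "invariant_matchings A s"
  show ?case
  proof (cases "m = 0")
    case True
    then have "A = {}" using A card_A by simp
    then show ?thesis using True by (simp add: invariant_matchings_empty kappa_0)
  next
    case False
    have count_containing: "real (card {M \<in> ?IM. C \<subseteq> M}) = kappa (m - j)"
      if C: "perfect_matching (\<Union>C) C" "\<Union>C \<subseteq> A" "image s ` C = C" "card (\<Union>C) = 2 * j" "j > 0"
      for C j
    proof -
      have "s ` \<Union>C \<subseteq> \<Union>C" using C(3) by blast
      then have "involution_on (A - \<Union>C) s" using involution_on_Diff[OF s] by blast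
      moreover have "card (A - \<Union>C) = 2 * (m - j)"
        using card_A C(2,4) A by (simp add: card_Diff_subset finite_subset)
      ultimately show ?thesis
        using card_invariant_matchings_containing[OF s C(1-3)] less.IH[of "m - j" "A - \<Union>C"] A fpf C(5) False
        by simp
    qed
    obtain x where x: "x \<in> A" using False card_A by fastforce
    have sx: "s x \<in> A" "s x \<noteq> x" "s (s x) = x" using s fpf x unfolding involution_on_def by auto
    have "real (card {M \<in> ?IM. {{x, s x}} \<subseteq> M}) = kappa (m - 1)"
      using count_containing[of "{{x, s x}}" 1] sx x perfect_matching_doubleton[of x "s x"]
      by (auto simp: insert_commute)
    moreover have "real (card {M \<in> ?IM. {{x, z}, {s x, s z}} \<subseteq> M}) = kappa (m - 2)"
      if z: "z \<in> A - {x, s x}" for z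
    proof -
      have sz: "s z \<in> A" "s z \<noteq> z" "s (s z) = z" using s fpf z unfolding involution_on_def by auto
      then have "distinct [x, z, s x, s z]" using z sx by auto
      then show ?thesis
        using count_containing[of "{{x, z}, {s x, s z}}" 2] perfect_matching_two_doubletons[of x z "s x" "s z"]
          x z sx sz
        by (auto simp: insert_commute)
    qed
    moreover have "card (A - {x, s x}) = 2 * (m - 1)" using card_A sx x A by (simp add: card_Diff_subset)
    ultimately have "real (card ?IM) = kappa (m - 1) + 2 * real (m - 1) * kappa (m - 2)"
      using card_invariant_matchings_by_partner[of A x s] A x sx by simp
    also have "\<dots> = kappa m"
      using False by (simp add: kappa_recurrence)
    finally show ?thesis .
  qed
qed

lemma card_invariant_matchings_two_fixpoints:
  assumes A: "finite A" and s: "involution_on A s" and ab: "a \<in> A" "b \<in> A" "a \<noteq> b"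
    and fixed: "s a = a" "s b = b" and fpf: "\<forall>x\<in>A - {a, b}. s x \<noteq> x"
    and card_A: "card A = 2 * m + 2"
  shows "real (card (invariant_matchings A s)) = kappa m"
proof -
  let ?IM = "invariant_matchings A s"
  have "{a, b} \<in> M" if M: "M \<in> ?IM" for M
  proof -
    have pm: "perfect_matching A M" and inv: "image s ` M = M"
      using M by (auto simp: invariant_matchings_def)
    obtain z where z: "{a, z} \<in> M" "z \<in> A" "z \<noteq> a"
      using perfect_matching_edge_through[OF pm ab(1)] by blast
    have "{a, s z} \<in> M" using imageI[OF z(1), of "image s"] inv fixed by simp
    then have "{a, s z} = {a, z}" using perfect_matching_edge_unique[OF pm _ z(1), of _ a] by blast
    then have "s z = z" using z(3) by (auto simp: doubleton_eq_iff)
    then have "z = b" using fpf z(2,3) by blast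
    then show ?thesis using z(1) by simp
  qed
  then have "?IM = {M \<in> ?IM. {{a, b}} \<subseteq> M}" by blast
  also have "card \<dots> = card (invariant_matchings (A - {a, b}) s)"
    using card_invariant_matchings_containing[OF s, of "{{a, b}}"] ab fixed
      perfect_matching_doubleton[OF ab(3)]
    by simp
  finally have "card ?IM = card (invariant_matchings (A - {a, b}) s)" .
  moreover have "involution_on (A - {a, b}) s" using involution_on_Diff[OF s, of "{a, b}"] fixed by simp
  moreover have "card (A - {a, b}) = 2 * m" using A ab card_A by (simp add: card_Diff_subset)
  ultimately show ?thesis
    using card_invariant_matchings_fixpoint_free[of "A - {a, b}" s m] A fpf by simp
qed

lemma Bij_byWitness:
  "f \<in> extensional S \<Longrightarrow> f ` S \<subseteq> S \<Longrightarrow> g ` S \<subseteq> S \<Longrightarrow>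
    \<forall>x\<in>S. g (f x) = x \<Longrightarrow> \<forall>x\<in>S. f (g x) = x \<Longrightarrow> f \<in> Bij S"
  unfolding Bij_def by (blast intro: bij_betw_byWitness)

lemma BijGroup_mult: "f \<in> Bij S \<Longrightarrow> g \<in> Bij S \<Longrightarrow> f \<otimes>\<^bsub>BijGroup S\<^esub> g = compose S f g"
  by (simp add: BijGroup_def)

definition perfect_matchings :: "'a set \<Rightarrow> 'a set set set" where
  "perfect_matchings V = {M. perfect_matching V M}"

lemma finite_perfect_matchings: "finite V \<Longrightarrow> finite (perfect_matchings V)"
  by (rule finite_subset[of _ "Pow (Pow V)"]) (auto simp: perfect_matchings_def dest: perfect_matching_Pow)

definition matching_action :: "'a set \<Rightarrow> ('a \<Rightarrow> 'a) \<Rightarrow> 'a set set \<Rightarrow> 'a set set" where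
  "matching_action V g = (\<lambda>M\<in>perfect_matchings V. image g ` M)"

lemma matching_action_Bij:
  assumes h: "bij_betw h V V"
  shows "matching_action V h \<in> Bij (perfect_matchings V)"
proof -
  define h' where "h' = inv_into V h"
  have h': "bij_betw h' V V" unfolding h'_def by (rule bij_betw_inv_into[OF h])
  have cancel: "h' ` h ` e = e" "h ` h' ` e = e" if "e \<subseteq> V" for e
    using that h unfolding h'_def by (auto simp: bij_betw_def inv_into_image_cancel image_inv_into_cancel)
  have cancel_matching: "image h' ` image h ` M = M" "image h ` image h' ` M = M"
    if "M \<in> perfect_matchings V" for M
  proof -
    have "M \<subseteq> Pow V" using that perfect_matching_Pow by (simp add: perfect_matchings_def)
    then have "(\<lambda>e. h' ` h ` e) ` M = M" "(\<lambda>e. h ` h' ` e) ` M = M"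
      using cancel by (simp_all add: subset_iff cong: image_cong)
    then show "image h' ` image h ` M = M" "image h ` image h' ` M = M"
      by (simp_all add: image_image)
  qed
  show ?thesis
  proof (rule Bij_byWitness[where g = "matching_action V h'"])
    show "matching_action V h \<in> extensional (perfect_matchings V)"
      by (simp add: matching_action_def)
    show "matching_action V h ` perfect_matchings V \<subseteq> perfect_matchings V"
      "matching_action V h' ` perfect_matchings V \<subseteq> perfect_matchings V"
      using perfect_matching_image[OF _ h] perfect_matching_image[OF _ h']
      by (auto simp: matching_action_def perfect_matchings_def)
    then show "\<forall>M\<in>perfect_matchings V. matching_action V h' (matching_action V h M) = M"
      "\<forall>M\<in>perfect_matchings V. matching_action V h (matching_action V h' M) = M"
      using cancel_matching by (auto simp: matching_action_def image_subset_iff)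
  qed
qed

lemma matching_action_compose:
  assumes "V \<subseteq> U" "bij_betw h V V"
  shows "matching_action V (compose U g h)
    = compose (perfect_matchings V) (matching_action V g) (matching_action V h)"
proof
  fix M
  show "matching_action V (compose U g h) M
    = compose (perfect_matchings V) (matching_action V g) (matching_action V h) M"
  proof (cases "M \<in> perfect_matchings V")
    case True
    then have "M \<subseteq> Pow V" using perfect_matching_Pow by (simp add: perfect_matchings_def)
    then have "compose U g h ` e = g ` h ` e" if "e \<in> M" for e
      using that assms(1) by (auto simp: compose_def)
    then have "image (compose U g h) ` M = image g ` image h ` M"
      by (simp add: image_image cong: image_cong)
    moreover have "image h ` M \<in> perfect_matchings V"
      using True perfect_matching_image[OF _ assms(2)] by (simp add: perfect_matchings_def)
    ultimately show ?thesis using True by (simp add: matching_action_def compose_def)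
  qed (simp add: matching_action_def compose_def)
qed

lemma group_action_matching_action:
  assumes H: "subgroup H (BijGroup U)" and V: "V \<subseteq> U" and bij: "\<And>h. h \<in> H \<Longrightarrow> bij_betw h V V"
  shows "group_action (BijGroup U\<lparr>carrier := H\<rparr>) (perfect_matchings V) (matching_action V)"
  unfolding group_action_def group_hom_def group_hom_axioms_def
proof (intro conjI)
  show "group (BijGroup U\<lparr>carrier := H\<rparr>)"
    by (rule subgroup.subgroup_is_group[OF H group_BijGroup])
  show "group (BijGroup (perfect_matchings V))" by (rule group_BijGroup)
  have Bij: "h \<in> Bij U" if "h \<in> H" for h
    using that subgroup.subset[OF H] by (auto simp: BijGroup_def)
  show "matching_action V \<in> hom (BijGroup U\<lparr>carrier := H\<rparr>) (BijGroup (perfect_matchings V))"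
  proof (rule homI)
    show "matching_action V h \<in> carrier (BijGroup (perfect_matchings V))"
      if "h \<in> carrier (BijGroup U\<lparr>carrier := H\<rparr>)" for h
      using that matching_action_Bij[OF bij] by (simp add: BijGroup_def)
    show "matching_action V (g \<otimes>\<^bsub>BijGroup U\<lparr>carrier := H\<rparr>\<^esub> h)
        = matching_action V g \<otimes>\<^bsub>BijGroup (perfect_matchings V)\<^esub> matching_action V h"
      if "g \<in> carrier (BijGroup U\<lparr>carrier := H\<rparr>)" and "h \<in> carrier (BijGroup U\<lparr>carrier := H\<rparr>)"
      for g h
      using that Bij bij matching_action_Bij[OF bij] matching_action_compose[OF V bij]
      by (simp add: BijGroup_mult)
  qed
qed

lemma invariants_matching_action:
  "invariants (perfect_matchings V) (matching_action V) h = invariant_matchings V h"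
  by (auto simp: invariants_def matching_action_def perfect_matchings_def invariant_matchings_def)

lemma chord_diagrams_eq_perfect_matchings: "chord_diagrams n = perfect_matchings (vertices n)"
  by (simp add: chord_diagrams_def is_chord_diagram_def perfect_matchings_def perfect_matching_def)

lemma quotient_diagram_equiv_eq_orbits:
  assumes bij: "\<And>h. h \<in> H \<Longrightarrow> bij_betw h (vertices n) (vertices n)"
    and agree: "(\<lambda>g. restrict g (vertices n)) ` G = (\<lambda>h. restrict h (vertices n)) ` H"
  shows "chord_diagrams n // diagram_equiv n G
    = orbits (BijGroup U\<lparr>carrier := H\<rparr>) (chord_diagrams n) (matching_action (vertices n))"
proof -
  let ?V = "vertices n"
  have same_images: "{image g ` M | g. g \<in> G} = {image h ` M | h. h \<in> H}"
    if M: "perfect_matching ?V M" for M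
  proof -
    have image_eq: "image g ` M = image h ` M" if "restrict g ?V = restrict h ?V" for g h
      using that perfect_matching_image_cong[OF M] by (metis restrict_apply')
    have "(\<exists>g\<in>G. f = restrict g ?V) \<longleftrightarrow> (\<exists>h\<in>H. f = restrict h ?V)" for f
      using agree by (simp add: set_eq_iff image_iff)
    then have "(\<exists>g\<in>G. X = image g ` M) \<longleftrightarrow> (\<exists>h\<in>H. X = image h ` M)" for X
      using image_eq by metis
    then show ?thesis
      unfolding set_eq_iff mem_Collect_eq by (simp add: Bex_def conj_commute)
  qed
  have "diagram_equiv n G `` {M} = orbit (BijGroup U\<lparr>carrier := H\<rparr>) (matching_action ?V) M"
    if M: "perfect_matching ?V M" for M
  proof -
    have "image h ` M \<in> chord_diagrams n" if "h \<in> H" for h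
      using perfect_matching_image[OF M bij[OF that]]
      by (simp add: chord_diagrams_eq_perfect_matchings perfect_matchings_def)
    then have images_H: "{image h ` M | h. h \<in> H} \<subseteq> chord_diagrams n" by blast
    have "diagram_equiv n G `` {M} = {image g ` M | g. g \<in> G} \<inter> chord_diagrams n"
      using M by (auto simp: diagram_equiv_def chord_diagrams_eq_perfect_matchings perfect_matchings_def)
    also have "\<dots> = {image h ` M | h. h \<in> H}"
      unfolding same_images[OF M] using images_H by (rule Int_absorb2)
    also have "\<dots> = orbit (BijGroup U\<lparr>carrier := H\<rparr>) (matching_action ?V) M"
      using M by (auto simp: orbit_def matching_action_def perfect_matchings_def)
    finally show ?thesis .
  qed
  then show ?thesis
    by (auto simp: quotient_def orbits_def chord_diagrams_eq_perfect_matchings perfect_matchings_def)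
qed

lemma num_classes_burnside:
  assumes H: "subgroup H (BijGroup U)" "finite H" and V: "vertices n \<subseteq> U"
    and bij: "\<And>h. h \<in> H \<Longrightarrow> bij_betw h (vertices n) (vertices n)"
    and agree: "(\<lambda>g. restrict g (vertices n)) ` G = (\<lambda>h. restrict h (vertices n)) ` H"
  shows "num_classes n G * card H = (\<Sum>h\<in>H. card (invariant_matchings (vertices n) h))"
proof -
  interpret group_action "BijGroup U\<lparr>carrier := H\<rparr>" "perfect_matchings (vertices n)"
      "matching_action (vertices n)"
    by (rule group_action_matching_action[OF H(1) V bij])
  have "finite (perfect_matchings (vertices n))"
    by (rule finite_perfect_matchings) (simp add: vertices_def)
  then show ?thesis
    using burnside H(2) quotient_diagram_equiv_eq_orbits[OF bij agree, of U]
    by (simp add: num_classes_def order_def invariants_matching_action chord_diagrams_eq_perfect_matchings)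
qed

definition rot_mod :: "nat \<Rightarrow> nat \<Rightarrow> nat \<Rightarrow> nat" where
  "rot_mod N k x = (x + k) mod N"

definition refl_mod :: "nat \<Rightarrow> nat \<Rightarrow> nat \<Rightarrow> nat" where
  "refl_mod N k x = (N + k - x) mod N"

lemma rot_mod_eq: "x < N \<Longrightarrow> k < N \<Longrightarrow> rot_mod N k x = (if x + k < N then x + k else x + k - N)"
  by (simp add: rot_mod_def mod_if)

lemma refl_mod_eq: "x < N \<Longrightarrow> k < N \<Longrightarrow> refl_mod N k x = (if x \<le> k then k - x else N + k - x)"
  by (auto simp: refl_mod_def mod_if)

lemma rot_mod_less: "x < N \<Longrightarrow> rot_mod N k x < N"
  by (simp add: rot_mod_def)

lemma refl_mod_less: "x < N \<Longrightarrow> refl_mod N k x < N"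
  by (simp add: refl_mod_def)

(* The two faces N and N + 1 of the polygon are fixed by rotations and swapped by reflections.
   They make the permutation representation of the dihedral group faithful, so that it has order 2N
   also for N = 2, where the reflection x -> -x fixes both vertices. *)
definition vertices_and_faces :: "nat \<Rightarrow> nat set" where
  "vertices_and_faces N = {..<N} \<union> {N, N + 1}"

definition rot_perm :: "nat \<Rightarrow> nat \<Rightarrow> nat \<Rightarrow> nat" where
  "rot_perm N k = (\<lambda>x\<in>vertices_and_faces N. if x < N then rot_mod N k x else x)"

definition refl_perm :: "nat \<Rightarrow> nat \<Rightarrow> nat \<Rightarrow> nat" where
  "refl_perm N k =
    (\<lambda>x\<in>vertices_and_faces N. if x < N then refl_mod N k x else if x = N then N + 1 else N)"

definition rotation_perms :: "nat \<Rightarrow> (nat \<Rightarrow> nat) set" where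
  "rotation_perms N = rot_perm N ` {..<N}"

definition reflection_perms :: "nat \<Rightarrow> (nat \<Rightarrow> nat) set" where
  "reflection_perms N = refl_perm N ` {..<N}"

definition dihedral_perms :: "nat \<Rightarrow> (nat \<Rightarrow> nat) set" where
  "dihedral_perms N = rotation_perms N \<union> reflection_perms N"

lemma rot_mod_rot_mod: "x < N \<Longrightarrow> rot_mod N a (rot_mod N b x) = rot_mod N (rot_mod N a b) x"
  by (simp add: rot_mod_def mod_simps ac_simps)

lemma rot_mod_refl_mod:
  "x < N \<Longrightarrow> a < N \<Longrightarrow> b < N \<Longrightarrow>
    rot_mod N a (refl_mod N b x) = refl_mod N (rot_mod N a b) x"
  by (auto simp: rot_mod_eq refl_mod_eq rot_mod_less refl_mod_less)

lemma refl_mod_rot_mod: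
  "x < N \<Longrightarrow> a < N \<Longrightarrow> b < N \<Longrightarrow>
    refl_mod N a (rot_mod N b x) = refl_mod N (refl_mod N a b) x"
  by (auto simp: rot_mod_eq refl_mod_eq rot_mod_less refl_mod_less)

lemma refl_mod_refl_mod:
  "x < N \<Longrightarrow> a < N \<Longrightarrow> b < N \<Longrightarrow>
    refl_mod N a (refl_mod N b x) = rot_mod N (refl_mod N a b) x"
  by (auto simp: rot_mod_eq refl_mod_eq rot_mod_less refl_mod_less)

lemma compose_rot_rot:
  "a < N \<Longrightarrow> b < N \<Longrightarrow>
    compose (vertices_and_faces N) (rot_perm N a) (rot_perm N b) = rot_perm N (rot_mod N a b)"
  by (rule ext) (auto simp: vertices_and_faces_def compose_def rot_perm_def rot_mod_rot_mod rot_mod_less)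

lemma compose_rot_refl:
  "a < N \<Longrightarrow> b < N \<Longrightarrow>
    compose (vertices_and_faces N) (rot_perm N a) (refl_perm N b) = refl_perm N (rot_mod N a b)"
  by (rule ext)
    (auto simp: vertices_and_faces_def compose_def rot_perm_def refl_perm_def rot_mod_refl_mod refl_mod_less)

lemma compose_refl_rot:
  "a < N \<Longrightarrow> b < N \<Longrightarrow>
    compose (vertices_and_faces N) (refl_perm N a) (rot_perm N b) = refl_perm N (refl_mod N a b)"
  by (rule ext)
    (auto simp: vertices_and_faces_def compose_def rot_perm_def refl_perm_def refl_mod_rot_mod rot_mod_less)

lemma compose_refl_refl:
  "a < N \<Longrightarrow> b < N \<Longrightarrow>
    compose (vertices_and_faces N) (refl_perm N a) (refl_perm N b) = rot_perm N (refl_mod N a b)"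
  by (rule ext)
    (auto simp: vertices_and_faces_def compose_def rot_perm_def refl_perm_def refl_mod_refl_mod refl_mod_less)

lemma rot_perm_0: "rot_perm N 0 = (\<lambda>x\<in>vertices_and_faces N. x)"
  by (rule ext) (simp add: rot_perm_def rot_mod_def)

lemma rot_perm_Bij: "k < N \<Longrightarrow> rot_perm N k \<in> Bij (vertices_and_faces N)"
  by (rule Bij_byWitness[where g = "rot_perm N (refl_mod N 0 k)"])
    (auto simp: vertices_and_faces_def rot_perm_def rot_mod_eq refl_mod_eq rot_mod_less)

lemma refl_perm_Bij: "k < N \<Longrightarrow> refl_perm N k \<in> Bij (vertices_and_faces N)"
  by (rule Bij_byWitness[where g = "refl_perm N k"])
    (auto simp: vertices_and_faces_def refl_perm_def refl_mod_eq refl_mod_less)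

lemma inv_rot_perm:
  assumes "k < N"
  shows "inv\<^bsub>BijGroup (vertices_and_faces N)\<^esub> rot_perm N k = rot_perm N (refl_mod N 0 k)"
proof (rule group.inv_equality[OF group_BijGroup])
  have "rot_mod N (refl_mod N 0 k) k = 0" using assms by (simp add: rot_mod_eq refl_mod_eq refl_mod_less)
  then show "rot_perm N (refl_mod N 0 k) \<otimes>\<^bsub>BijGroup (vertices_and_faces N)\<^esub> rot_perm N k
      = \<one>\<^bsub>BijGroup (vertices_and_faces N)\<^esub>"
    using assms by (simp add: BijGroup_mult rot_perm_Bij refl_mod_less compose_rot_rot rot_perm_0)
      (simp add: BijGroup_def)
qed (use assms in \<open>simp_all add: BijGroup_def rot_perm_Bij refl_mod_less\<close>)

lemma inv_refl_perm:
  assumes "k < N"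
  shows "inv\<^bsub>BijGroup (vertices_and_faces N)\<^esub> refl_perm N k = refl_perm N k"
proof (rule group.inv_equality[OF group_BijGroup])
  have "refl_mod N k k = 0" using assms by (simp add: refl_mod_eq)
  then show "refl_perm N k \<otimes>\<^bsub>BijGroup (vertices_and_faces N)\<^esub> refl_perm N k
      = \<one>\<^bsub>BijGroup (vertices_and_faces N)\<^esub>"
    using assms by (simp add: BijGroup_mult refl_perm_Bij compose_refl_refl rot_perm_0)
      (simp add: BijGroup_def)
qed (use assms in \<open>simp_all add: BijGroup_def refl_perm_Bij\<close>)

lemma subgroup_rotation_perms: "0 < N \<Longrightarrow> subgroup (rotation_perms N) (BijGroup (vertices_and_faces N))"
proof (rule group.subgroupI[OF group_BijGroup])
  show "rotation_perms N \<subseteq> carrier (BijGroup (vertices_and_faces N))"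
    by (auto simp: rotation_perms_def BijGroup_def rot_perm_Bij)
  show "0 < N \<Longrightarrow> rotation_perms N \<noteq> {}" by (auto simp: rotation_perms_def)
  show "inv\<^bsub>BijGroup (vertices_and_faces N)\<^esub> f \<in> rotation_perms N" if "f \<in> rotation_perms N" for f
    using that by (auto simp: rotation_perms_def inv_rot_perm refl_mod_less)
  show "f \<otimes>\<^bsub>BijGroup (vertices_and_faces N)\<^esub> g \<in> rotation_perms N"
    if "f \<in> rotation_perms N" "g \<in> rotation_perms N" for f g
    using that by (auto simp: rotation_perms_def BijGroup_mult rot_perm_Bij compose_rot_rot rot_mod_less)
qed

lemma subgroup_dihedral_perms: "0 < N \<Longrightarrow> subgroup (dihedral_perms N) (BijGroup (vertices_and_faces N))"
proof (rule group.subgroupI[OF group_BijGroup])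
  show "dihedral_perms N \<subseteq> carrier (BijGroup (vertices_and_faces N))"
    by (auto simp: dihedral_perms_def rotation_perms_def reflection_perms_def BijGroup_def
        rot_perm_Bij refl_perm_Bij)
  show "0 < N \<Longrightarrow> dihedral_perms N \<noteq> {}" by (auto simp: dihedral_perms_def rotation_perms_def)
  show "inv\<^bsub>BijGroup (vertices_and_faces N)\<^esub> f \<in> dihedral_perms N" if "f \<in> dihedral_perms N" for f
    using that by (auto simp: dihedral_perms_def rotation_perms_def reflection_perms_def
        inv_rot_perm inv_refl_perm refl_mod_less)
  show "f \<otimes>\<^bsub>BijGroup (vertices_and_faces N)\<^esub> g \<in> dihedral_perms N"
    if "f \<in> dihedral_perms N" "g \<in> dihedral_perms N" for f g
    using that by (auto simp: dihedral_perms_def rotation_perms_def reflection_perms_def BijGroup_mult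
        rot_perm_Bij refl_perm_Bij compose_rot_rot compose_rot_refl compose_refl_rot compose_refl_refl
        rot_mod_less refl_mod_less)
qed

lemma bij_betw_dihedral_perms: "h \<in> dihedral_perms N \<Longrightarrow> bij_betw h {..<N} {..<N}"
  unfolding dihedral_perms_def rotation_perms_def reflection_perms_def
proof (elim UnE imageE)
  fix k assume "k \<in> {..<N}" "h = rot_perm N k"
  then show "bij_betw h {..<N} {..<N}"
    by (intro bij_betw_byWitness[where f' = "rot_perm N (refl_mod N 0 k)"])
      (auto simp: vertices_and_faces_def rot_perm_def rot_mod_eq refl_mod_eq rot_mod_less)
next
  fix k assume "k \<in> {..<N}" "h = refl_perm N k"
  then show "bij_betw h {..<N} {..<N}"
    by (intro bij_betw_byWitness[where f' = "refl_perm N k"])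
      (auto simp: vertices_and_faces_def refl_perm_def refl_mod_eq refl_mod_less)
qed

lemma inj_on_rot_perm: "inj_on (rot_perm N) {..<N}"
proof
  fix a b assume ab: "a \<in> {..<N}" "b \<in> {..<N}" and "rot_perm N a = rot_perm N b"
  then have "rot_perm N a 0 = rot_perm N b 0" by simp
  then show "a = b" using ab by (simp add: rot_perm_def vertices_and_faces_def rot_mod_def)
qed

lemma inj_on_refl_perm: "inj_on (refl_perm N) {..<N}"
proof
  fix a b assume ab: "a \<in> {..<N}" "b \<in> {..<N}" and "refl_perm N a = refl_perm N b"
  then have "refl_perm N a 0 = refl_perm N b 0" by simp
  then show "a = b" using ab by (simp add: refl_perm_def vertices_and_faces_def refl_mod_def)
qed

lemma rotation_perms_Int_reflection_perms: "rotation_perms N \<inter> reflection_perms N = {}"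
proof -
  have "rot_perm N a \<noteq> refl_perm N b" for a b
  proof
    assume "rot_perm N a = refl_perm N b"
    then have "rot_perm N a N = refl_perm N b N" by simp
    then show False by (simp add: rot_perm_def refl_perm_def vertices_and_faces_def)
  qed
  then show ?thesis unfolding rotation_perms_def reflection_perms_def by blast
qed

lemma rotation_funpow_eq: "x < 2 * n \<Longrightarrow> (rotation n ^^ k) x = rot_mod (2 * n) k x"
  by (induction k) (simp_all add: rotation_def rot_mod_def mod_Suc_eq)

lemma rotation_funpow_reflection_eq:
  "x < 2 * n \<Longrightarrow> ((rotation n ^^ k) \<circ> reflection n) x = refl_mod (2 * n) k x"
  by (simp add: rotation_funpow_eq reflection_def rot_mod_def refl_mod_def mod_add_left_eq)

lemma restrict_cyclic_group:
  "(\<lambda>g. restrict g (vertices n)) ` cyclic_group n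
    = (\<lambda>h. restrict h (vertices n)) ` rotation_perms (2 * n)"
proof -
  have "restrict (rotation n ^^ k) (vertices n) = restrict (rot_perm (2 * n) k) (vertices n)" for k
    by (auto simp: vertices_def rot_perm_def vertices_and_faces_def rotation_funpow_eq)
  moreover have "cyclic_group n = (\<lambda>k. rotation n ^^ k) ` {..<2 * n}"
    by (auto simp: cyclic_group_def)
  ultimately show ?thesis
    unfolding rotation_perms_def by (simp add: image_image)
qed

lemma restrict_dihedral_group:
  "(\<lambda>g. restrict g (vertices n)) ` dihedral_group n
    = (\<lambda>h. restrict h (vertices n)) ` dihedral_perms (2 * n)"
proof -
  have "restrict ((rotation n ^^ k) \<circ> reflection n) (vertices n)
      = restrict (refl_perm (2 * n) k) (vertices n)" for k
    by (auto simp: vertices_def refl_perm_def vertices_and_faces_def rotation_funpow_reflection_eq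
        simp del: comp_apply)
  moreover have "{(rotation n ^^ k) \<circ> reflection n | k. k < 2 * n}
      = (\<lambda>k. (rotation n ^^ k) \<circ> reflection n) ` {..<2 * n}"
    by auto
  ultimately show ?thesis
    using restrict_cyclic_group
    unfolding dihedral_group_def dihedral_perms_def reflection_perms_def by (simp add: image_Un image_image)
qed

lemma card_invariant_matchings_refl_mod:
  assumes n: "0 < n" and k: "k < 2 * n"
  shows "real (card (invariant_matchings {..<2 * n} (refl_mod (2 * n) k)))
    = (if even k then kappa (n - 1) else kappa n)"
proof -
  let ?s = "refl_mod (2 * n) k"
  have inv: "involution_on {..<2 * n} ?s"
    using k by (auto simp: involution_on_def refl_mod_less refl_mod_eq)
  have fixed_iff: "?s x = x \<longleftrightarrow> 2 * x = k \<or> 2 * x = k + 2 * n" if "x < 2 * n" for x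
    using that k by (auto simp: refl_mod_eq)
  show ?thesis
  proof (cases "even k")
    case True
    then obtain j where j: "k = 2 * j" by blast
    have "\<forall>x\<in>{..<2 * n} - {j, j + n}. ?s x \<noteq> x" using fixed_iff j by auto
    moreover have "?s j = j" "?s (j + n) = j + n" using fixed_iff j k by auto
    moreover have "card {..<2 * n} = 2 * (n - 1) + 2" using n by simp
    ultimately show ?thesis
      using card_invariant_matchings_two_fixpoints[OF _ inv, of j "j + n"] True j k n by simp
  next
    case False
    then have "\<forall>x\<in>{..<2 * n}. ?s x \<noteq> x"
      using fixed_iff by (metis dvd_add_left_iff dvd_triv_left lessThan_iff)
    then show ?thesis using card_invariant_matchings_fixpoint_free[OF _ inv] False by simp
  qed
qed

lemma sum_lessThan_even_odd: "(\<Sum>k<2 * n. if even k then a else b) = of_nat n * (a + b :: 'a::comm_semiring_1)"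
  by (induction n) (simp_all add: algebra_simps)

lemma d_num_burnside:
  assumes n: "0 < n"
  shows "d_num n * (4 * n)
    = c_num n * (2 * n) + (\<Sum>k<2 * n. card (invariant_matchings {..<2 * n} (refl_mod (2 * n) k)))"
proof -
  let ?N = "2 * n" and ?U = "vertices_and_faces (2 * n)"
  let ?fix = "\<lambda>h. card (invariant_matchings (vertices n) h)"
  have V: "vertices n = {..<?N}" by (auto simp: vertices_def)
  have V_sub: "vertices n \<subseteq> ?U" by (auto simp: V vertices_and_faces_def)
  have bij: "bij_betw h (vertices n) (vertices n)" if "h \<in> dihedral_perms ?N" for h
    using bij_betw_dihedral_perms[OF that] by (simp add: V)
  have fin: "finite (rotation_perms ?N)" "finite (reflection_perms ?N)"
    by (simp_all add: rotation_perms_def reflection_perms_def)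
  have D: "d_num n * (4 * n) = (\<Sum>h\<in>dihedral_perms ?N. ?fix h)"
  proof -
    have "card (dihedral_perms ?N) = 4 * n"
      using card_Un_disjoint[OF fin rotation_perms_Int_reflection_perms]
      by (simp add: dihedral_perms_def rotation_perms_def reflection_perms_def
          card_image inj_on_rot_perm inj_on_refl_perm)
    then show ?thesis
      using num_classes_burnside[OF subgroup_dihedral_perms _ V_sub bij restrict_dihedral_group] n fin
      by (simp add: d_num_def dihedral_perms_def)
  qed
  have C: "c_num n * (2 * n) = (\<Sum>h\<in>rotation_perms ?N. ?fix h)"
  proof -
    have "card (rotation_perms ?N) = 2 * n"
      by (simp add: rotation_perms_def card_image inj_on_rot_perm)
    then show ?thesis
      using num_classes_burnside[OF subgroup_rotation_perms _ V_sub bij restrict_cyclic_group] n fin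
      by (simp add: c_num_def dihedral_perms_def)
  qed
  have "(\<Sum>h\<in>reflection_perms ?N. ?fix h) = (\<Sum>k<?N. ?fix (refl_perm ?N k))"
    unfolding reflection_perms_def by (rule sum.reindex[OF inj_on_refl_perm, unfolded comp_def])
  also have "\<dots> = (\<Sum>k<?N. card (invariant_matchings {..<?N} (refl_mod ?N k)))"
  proof (rule sum.cong[OF refl])
    fix k assume "k \<in> {..<?N}"
    have "\<forall>x\<in>vertices n. refl_perm ?N k x = refl_mod ?N k x"
      by (simp add: V refl_perm_def vertices_and_faces_def)
    then show "?fix (refl_perm ?N k) = card (invariant_matchings {..<?N} (refl_mod ?N k))"
      by (metis V invariant_matchings_cong)
  qed
  finally show ?thesis
    using D C sum.union_disjoint[OF fin rotation_perms_Int_reflection_perms, of ?fix]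
    by (simp add: dihedral_perms_def)
qed

theorem theorem3:
  fixes n :: nat
  assumes "n \<ge> 1"
  shows "real (d_num n) = 1/2 * (real (c_num n) + 1/2 * (kappa (n - 1) + kappa n))"
proof -
  have n: "0 < n" using assms by simp
  have "real (d_num n) * (4 * n)
      = real (c_num n) * (2 * n) + (\<Sum>k<2 * n. if even k then kappa (n - 1) else kappa n)"
    using arg_cong[OF d_num_burnside[OF n], of real] card_invariant_matchings_refl_mod[OF n]
    by (simp add: of_nat_sum)
  also have "\<dots> = real (c_num n) * (2 * n) + n * (kappa (n - 1) + kappa n)"
    by (simp add: sum_lessThan_even_odd)
  finally have "real n * (4 * real (d_num n)) = real n * (2 * real (c_num n) + (kappa (n - 1) + kappa n))"
    by (simp add: algebra_simps)
  then have "4 * real (d_num n) = 2 * real (c_num n) + (kappa (n - 1) + kappa n)"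
    using n by simp
  then show ?thesis by (simp add: field_simps)
qed

end
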